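(* Let $\Omega_T$ be the infinite triangular lattice graph, i.e. the graph with vertex set $\mathbb{Z}^2$ in which $(a,b)$ is adjacent to $(a\pm1,b)$, $(a,b\pm1)$, $(a+1,b+1)$ and $(a-1,b-1)$ (a 6-regular graph). Then $\chi_{td}(\Omega_T) = 12$.
   Context: For a (possibly infinite) simple graph $G$ and a positive integer $k$, a proper $k$-total difference labeling of $G$ is a function $f: V(G)\to\{1,\dots,k\}$, extended to edges by $f(\{u,v\}) = |f(u)-f(v)|$, such that: (i) adjacent vertices receive different labels; (ii) two distinct edges sharing a vertex receive different labels; (iii) no edge receives the same label as either of its endpoints. $\chi_{td}(G)$ denotes the smallest $k$ for which $G$ has a proper $k$-total difference labeling. *)

theory Defs
  imports Main
begin

text \<open>A (possibly infinite) simple graph is given by a symmetric irreflexive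
adjacency relation adj on a vertex type; edges are unordered pairs {u,v} with adj u v.
Labels f :: 'v => nat; edge label of {u,v} is |f u - f v| (computed on int).\<close>

definition proper_total_diff_labeling ::
  "('v \<Rightarrow> 'v \<Rightarrow> bool) \<Rightarrow> nat \<Rightarrow> ('v \<Rightarrow> nat) \<Rightarrow> bool" where
  "proper_total_diff_labeling adj k f \<longleftrightarrow>
     (\<forall>v. f v \<in> {1..k}) \<and>
     (\<forall>u v. adj u v \<longrightarrow> f u \<noteq> f v) \<and>
     (\<forall>u v w. adj u v \<and> adj u w \<and> v \<noteq> w \<longrightarrow>
        \<bar>int (f u) - int (f v)\<bar> \<noteq> \<bar>int (f u) - int (f w)\<bar>) \<and>
     (\<forall>u v. adj u v \<longrightarrow> \<bar>int (f u) - int (f v)\<bar> \<noteq> int (f u)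
                      \<and> \<bar>int (f u) - int (f v)\<bar> \<noteq> int (f v))"

definition chi_td :: "('v \<Rightarrow> 'v \<Rightarrow> bool) \<Rightarrow> nat" where
  "chi_td adj = (LEAST k. k > 0 \<and> (\<exists>f. proper_total_diff_labeling adj k f))"

definition tri_adj :: "int \<times> int \<Rightarrow> int \<times> int \<Rightarrow> bool" where
  "tri_adj p q \<longleftrightarrow>
     (case p of (a, b) \<Rightarrow>
        q \<in> {(a+1, b), (a-1, b), (a, b+1), (a, b-1), (a+1, b+1), (a-1, b-1)})"

end

theory Submission
  imports Defs
begin

(* Lower bound: the six edges at a vertex labelled x carry six distinct differences |x - y|,
   where each neighbour label y is compatible with x (y \<noteq> x and neither of x, y is twice the
   other). Starting from the labels {1..11}, repeatedly discarding every label that has fewer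
   than six distinct differences to compatible labels still present removes {5,6}, then 4, 9,
   {1,2,7} and finally {3,8,10,11}, so no labeling with at most 11 labels exists.
   Upper bound: (a,b) \<mapsto> a + 2b maps each neighbourhood of the triangular lattice bijectively
   onto {t \<plusminus> 1, t \<plusminus> 2, t \<plusminus> 3}, so it suffices to label the distance graph of \<int> with distances
   {1,2,3}; the 9-periodic pattern 8,7,1,10,9,4,3,12,11 does this with 12 labels. *)

definition label_diff :: "nat \<Rightarrow> nat \<Rightarrow> int" where
  "label_diff x y = \<bar>int x - int y\<bar>"

definition compatible_labels :: "nat \<Rightarrow> nat \<Rightarrow> bool" where
  "compatible_labels x y \<longleftrightarrow> x \<noteq> y \<and> label_diff x y \<noteq> int x \<and> label_diff x y \<noteq> int y"

lemma proper_total_diff_labeling_iff: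
  "proper_total_diff_labeling adj k f \<longleftrightarrow>
     range f \<subseteq> {1..k} \<and>
     (\<forall>u v. adj u v \<longrightarrow> compatible_labels (f u) (f v)) \<and>
     (\<forall>u. inj_on (\<lambda>v. label_diff (f u) (f v)) {v. adj u v})"
  unfolding proper_total_diff_labeling_def compatible_labels_def label_diff_def inj_on_def
  by blast

lemma chi_td_eqI:
  assumes "0 < k" and "proper_total_diff_labeling adj k f"
    and "\<And>j g. proper_total_diff_labeling adj j g \<Longrightarrow> k \<le> j"
  shows "chi_td adj = k"
  unfolding chi_td_def using assms by (intro Least_equality) auto

definition available_diffs :: "nat set \<Rightarrow> nat \<Rightarrow> int set" where
  "available_diffs S x = label_diff x ` (S \<inter> {y. compatible_labels x y})"

definition pruned_labels :: "nat \<Rightarrow> nat set \<Rightarrow> nat set" where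
  "pruned_labels d S = S \<inter> {x. d \<le> card (available_diffs S x)}"

lemma card_neighbourhood_le_available_diffs:
  assumes "proper_total_diff_labeling adj k f" and "range f \<subseteq> S" and "finite S"
  shows "card {v. adj u v} \<le> card (available_diffs S (f u))"
proof (rule card_inj_on_le)
  show "inj_on (\<lambda>v. label_diff (f u) (f v)) {v. adj u v}"
    using assms(1) by (simp add: proper_total_diff_labeling_iff)
  show "(\<lambda>v. label_diff (f u) (f v)) ` {v. adj u v} \<subseteq> available_diffs S (f u)"
    using assms(1,2) unfolding proper_total_diff_labeling_iff available_diffs_def by blast
  show "finite (available_diffs S (f u))"
    using assms(3) by (simp add: available_diffs_def)
qed

lemma range_subset_pruned_labels:
  assumes "proper_total_diff_labeling adj k f" and "range f \<subseteq> S" and "finite S"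
    and "\<And>u. d \<le> card {v. adj u v}"
  shows "range f \<subseteq> pruned_labels d S"
  using card_neighbourhood_le_available_diffs[OF assms(1-3)] assms(2,4)
  unfolding pruned_labels_def by (auto intro: le_trans)

lemma card_tri_adj_neighbourhood: "card {v. tri_adj u v} = 6"
proof -
  obtain a b where u: "u = (a, b)" by (cases u)
  have "{v. tri_adj u v} = {(a+1, b), (a-1, b), (a, b+1), (a, b-1), (a+1, b+1), (a-1, b-1)}"
    by (auto simp: u tri_adj_def)
  then show ?thesis by simp
qed

(* Rewriting pruned_labels alone first leaves the cardinality conditions at numerals; unfolding
   available_diffs under its binder instead makes the simplifier blow up. *)
lemma pruned_labels_6_steps:
  "pruned_labels 6 {1,2,3,4,5,6,7,8,9,10,11} = {1,2,3,4,7,8,9,10,11}"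
  "pruned_labels 6 {1,2,3,4,7,8,9,10,11} = {1,2,3,7,8,9,10,11}"
  "pruned_labels 6 {1,2,3,7,8,9,10,11} = {1,2,3,7,8,10,11}"
  "pruned_labels 6 {1,2,3,7,8,10,11} = {3,8,10,11}"
  "pruned_labels 6 {3,8,10,11} = {}"
  by (simp_all only: pruned_labels_def Int_insert_left mem_Collect_eq Int_empty_left)
    (simp_all add: available_diffs_def compatible_labels_def label_diff_def Int_insert_left
      card_insert_if)

lemma tri_adj_labeling_bound_ge_12:
  assumes f: "proper_total_diff_labeling tri_adj k f"
  shows "12 \<le> k"
proof (rule ccontr)
  have prune: "range f \<subseteq> T" if "range f \<subseteq> S" "pruned_labels 6 S = T" "finite S" for S T
    using range_subset_pruned_labels[OF f that(1,3), of 6] that(2)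
    by (simp add: card_tri_adj_neighbourhood)
  assume "\<not> 12 \<le> k"
  then have "{1..k} \<subseteq> {1,2,3,4,5,6,7,8,9,10,11}"
    by (auto simp: subset_iff) arith
  then have "range f \<subseteq> {1,2,3,4,5,6,7,8,9,10,11}"
    using f by (auto simp: proper_total_diff_labeling_iff)
  then have "range f \<subseteq> {1,2,3,4,7,8,9,10,11}"
    using pruned_labels_6_steps(1) by (rule prune) simp
  then have "range f \<subseteq> {1,2,3,7,8,9,10,11}"
    using pruned_labels_6_steps(2) by (rule prune) simp
  then have "range f \<subseteq> {1,2,3,7,8,10,11}"
    using pruned_labels_6_steps(3) by (rule prune) simp
  then have "range f \<subseteq> {3,8,10,11}"
    using pruned_labels_6_steps(4) by (rule prune) simp
  then have "range f \<subseteq> {}"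
    using pruned_labels_6_steps(5) by (rule prune) simp
  then show False by simp
qed

lemma proper_total_diff_labeling_comp:
  assumes "proper_total_diff_labeling adj' k g"
    and "\<And>u v. adj u v \<Longrightarrow> adj' (h u) (h v)"
    and "\<And>u v w. adj u v \<Longrightarrow> adj u w \<Longrightarrow> h v = h w \<Longrightarrow> v = w"
  shows "proper_total_diff_labeling adj k (g \<circ> h)"
  using assms unfolding proper_total_diff_labeling_def by (simp; metis)

definition distance_adj :: "int set \<Rightarrow> int \<Rightarrow> int \<Rightarrow> bool" where
  "distance_adj D s t \<longleftrightarrow> \<bar>s - t\<bar> \<in> D"

lemma distance_adj_neighbourhood: "{t. distance_adj D s t} = (\<lambda>d. s + d) ` {d. \<bar>d\<bar> \<in> D}"
proof -
  have "t = s + (t - s)" for t by simp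
  then show ?thesis by (force simp: distance_adj_def abs_minus_commute)
qed

definition tri_proj :: "int \<times> int \<Rightarrow> int" where
  "tri_proj = (\<lambda>(a, b). a + 2 * b)"

lemma tri_adj_tri_proj: "tri_adj u v \<Longrightarrow> distance_adj {1, 2, 3} (tri_proj u) (tri_proj v)"
  by (cases u) (auto simp: tri_adj_def tri_proj_def distance_adj_def)

lemma tri_proj_inj_on_neighbourhood:
  "tri_adj u v \<Longrightarrow> tri_adj u w \<Longrightarrow> tri_proj v = tri_proj w \<Longrightarrow> v = w"
  by (cases u) (auto simp: tri_adj_def tri_proj_def)

definition periodic_labeling :: "int \<Rightarrow> nat" where
  "periodic_labeling t = [8, 7, 1, 10, 9, 4, 3, 12, 11] ! nat (t mod 9)"

lemma periodic_labeling_mod: "periodic_labeling (t + d) = periodic_labeling (t mod 9 + d)"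
  unfolding periodic_labeling_def by (simp add: mod_add_left_eq)

lemma periodic_labeling_local:
  shows "\<forall>d \<in> {-3, -2, -1, 1, 2, 3}. compatible_labels (periodic_labeling s) (periodic_labeling (s + d))"
    and "inj_on (\<lambda>d. label_diff (periodic_labeling s) (periodic_labeling (s + d))) {-3, -2, -1, 1, 2, 3}"
proof -
  define r where "r = s mod 9"
  have shift: "periodic_labeling (s + d) = periodic_labeling (r + d)" for d
    unfolding r_def by (rule periodic_labeling_mod)
  have at_s: "periodic_labeling s = periodic_labeling r"
    using shift[of 0] by simp
  have "r \<in> {0, 1, 2, 3, 4, 5, 6, 7, 8}"
    unfolding r_def by auto
  then show
    "\<forall>d \<in> {-3, -2, -1, 1, 2, 3}. compatible_labels (periodic_labeling s) (periodic_labeling (s + d))"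
    "inj_on (\<lambda>d. label_diff (periodic_labeling s) (periodic_labeling (s + d))) {-3, -2, -1, 1, 2, 3}"
    unfolding shift at_s by (auto simp: periodic_labeling_def compatible_labels_def label_diff_def)
qed

lemma range_periodic_labeling: "range periodic_labeling \<subseteq> {1..12}"
proof
  fix x assume "x \<in> range periodic_labeling"
  then obtain t where "x = periodic_labeling t" by blast
  moreover have "nat (t mod 9) < length [8, 7, 1, 10, 9, 4, 3, 12, 11 :: nat]"
    by simp
  ultimately have "x \<in> set [8, 7, 1, 10, 9, 4, 3, 12, 11]"
    unfolding periodic_labeling_def by (metis nth_mem)
  then show "x \<in> {1..12}" by auto
qed

lemma proper_periodic_labeling:
  "proper_total_diff_labeling (distance_adj {1, 2, 3}) 12 periodic_labeling"
proof -
  have neighbourhood: "{t. distance_adj {1, 2, 3} s t} = (\<lambda>d. s + d) ` {-3, -2, -1, 1, 2, 3}" for s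
  proof -
    have "{d. \<bar>d\<bar> \<in> {1, 2, 3}} = {-3, -2, -1, 1, 2, 3 :: int}"
      by auto
    then show ?thesis by (simp only: distance_adj_neighbourhood)
  qed
  have "\<forall>t \<in> {t. distance_adj {1, 2, 3} s t}. compatible_labels (periodic_labeling s) (periodic_labeling t)"
    for s unfolding neighbourhood using periodic_labeling_local(1) by blast
  moreover have "inj_on (\<lambda>t. label_diff (periodic_labeling s) (periodic_labeling t))
      {t. distance_adj {1, 2, 3} s t}" for s
    unfolding neighbourhood using periodic_labeling_local(2)
    by (intro inj_on_imageI) (simp add: comp_def)
  ultimately show ?thesis
    using range_periodic_labeling by (simp add: proper_total_diff_labeling_iff)
qed

lemma proper_tri_labeling: "proper_total_diff_labeling tri_adj 12 (periodic_labeling \<circ> tri_proj)"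
  using proper_periodic_labeling tri_adj_tri_proj tri_proj_inj_on_neighbourhood
  by (rule proper_total_diff_labeling_comp)

theorem mainTheorem4:
  shows "chi_td tri_adj = 12"
  by (rule chi_td_eqI[OF _ proper_tri_labeling tri_adj_labeling_bound_ge_12]) simp

end
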